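(* Let $d\ge1$, $0<s_0<s_1$, $0<\alpha_0<\alpha_1$, $W=[s_0,s_1]\times[\alpha_0,\alpha_1]$ with interior $W^\circ$. Let $\varphi\in C^2(W^\circ,\mathbb{R})$ be non-negative and convex, with $\varphi(s,\alpha)\to\infty$ whenever $s\to s_0$, $s\to s_1$, $\alpha\to\alpha_0$ or $\alpha\to\alpha_1$, and strongly convex: there is $\theta>0$ with $\nabla^2\varphi(x)-\theta I$ positive semidefinite for all $x\in W^\circ$. For $g\in L^2_0(\mathbb{T}^d;\mathbb{C})$, $u_d\in L^2(\mathbb{T}^d;\mathbb{C})$ define $\mathcal{S}(s,\alpha)=\big(\frac{\alpha}{\alpha+|k|^{2s}}\hat g_k\big)_{k\in\mathbb{Z}^d}$ and $j(s,\alpha)=\frac{1}{2(2\pi)^d}\|\mathcal{S}(s,\alpha)-\widehat{\mathbf U}_d\|_{\ell^2}^2+\varphi(s,\alpha)$, where $\widehat{\mathbf U}_d=(\hat u_{d,k})_k$. Then, if $\|g\|_{L^2}$ and $\|u_d\|_{L^2}$ are sufficiently small, there exists a constant $\kappa>0$ such that $\nabla^2 j(s,\alpha)-\kappa I$ is positive semidefinite for all $(s,\alpha)\in W^\circ$.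
   Context: $\mathbb{T}^d=\mathbb{R}^d/(2\pi\mathbb{Z})^d$; $\hat u_k=\int_{\mathbb{T}^d}u\,e^{-ik\cdot x}dx$; convention $|0|^{2s}=0$; $L^2_0$ is the zero-mean subspace of $L^2$. "Sufficiently small" means: there is a threshold (depending on $W$, $d$ and $\theta$) such that the conclusion holds whenever both norms lie below it. *)

theory Defs
  imports "HOL-Analysis.Analysis"
begin

text \<open>The torus T^d = R^d/(2 pi Z)^d is represented by the fundamental cube [0,2 pi]^d;
  functions on the torus are functions on this cube (with Lebesgue measure).\<close>

definition torus_cube :: "(real^'d) set" where
  "torus_cube = cbox 0 (\<chi> i. 2 * pi)"

definition L2_torus :: "(real^'d \<Rightarrow> complex) \<Rightarrow> bool" where
  "L2_torus f \<longleftrightarrow> set_borel_measurable lebesgue torus_cube f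
      \<and> set_integrable lebesgue torus_cube (\<lambda>x. (cmod (f x))^2)"

definition L2_0_torus :: "(real^'d \<Rightarrow> complex) \<Rightarrow> bool" where
  "L2_0_torus f \<longleftrightarrow> L2_torus f \<and> (LINT x:torus_cube|lebesgue. f x) = 0"

definition L2_norm_torus :: "(real^'d \<Rightarrow> complex) \<Rightarrow> real" where
  "L2_norm_torus f = sqrt (LINT x:torus_cube|lebesgue. (cmod (f x))^2)"

definition lattice :: "(real^'d) set" where
  "lattice = {k. \<forall>i. k $ i \<in> \<int>}"

definition fourier_coeff :: "(real^'d \<Rightarrow> complex) \<Rightarrow> real^'d \<Rightarrow> complex" where
  "fourier_coeff f k = (LINT x:torus_cube|lebesgue. f x * exp (- \<i> * complex_of_real (k \<bullet> x)))"

text \<open>S(s,alpha)_k = alpha/(alpha+|k|^{2s}) hat g_k; note 0 powr a = 0, matching |0|^{2s}=0.\<close>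
definition S_op :: "(real^'d \<Rightarrow> complex) \<Rightarrow> real \<Rightarrow> real \<Rightarrow> real^'d \<Rightarrow> complex" where
  "S_op g s \<alpha> k = complex_of_real (\<alpha> / (\<alpha> + norm k powr (2 * s))) * fourier_coeff g k"

text \<open>j(s,alpha), with the point (s,alpha) written as x :: real^2, x$1 = s, x$2 = alpha.\<close>
definition j_fun :: "(real^'d \<Rightarrow> complex) \<Rightarrow> (real^'d \<Rightarrow> complex) \<Rightarrow> (real^2 \<Rightarrow> real) \<Rightarrow> real^2 \<Rightarrow> real" where
  "j_fun g u \<phi> x =
     1 / (2 * (2 * pi) ^ CARD('d)) *
       infsum (\<lambda>k. (cmod (S_op g (x $ 1) (x $ 2) k - fourier_coeff u k))^2) (lattice :: (real^'d) set)
     + \<phi> x"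

definition grad_hess :: "(real^2 \<Rightarrow> real) \<Rightarrow> (real^2 \<Rightarrow> real^2) \<Rightarrow> (real^2 \<Rightarrow> real^2^2) \<Rightarrow> (real^2) set \<Rightarrow> bool" where
  "grad_hess f G H S \<longleftrightarrow> (\<forall>x\<in>S. (f has_derivative (\<lambda>v. G x \<bullet> v)) (at x)
                                  \<and> (G has_derivative (\<lambda>v. H x *v v)) (at x))"

end

theory Submission
  imports Defs
begin

(* Write a_k(s, \<alpha>) = \<alpha> / (\<alpha> + |k|^(2s)) and L = ln |k|.  The data term of j is a sum over the
   lattice of |a_k g_k - u_k|^2 (hats dropped), a quadratic polynomial in a_k whose coefficients are
   bounded by |g_k|^2 + |u_k|^2.  Since a_k / (1 - a_k) = \<alpha> exp (-2 s L), the derivatives of a_k are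
   a_k (1 - a_k) times polynomials in L and 1 / \<alpha>, and a_k (1 - a_k) <= \<alpha> exp (-2 s L) absorbs every
   power of L uniformly for s >= s0.  Hence each term and its first two derivatives are bounded on W by
   C (|g_k|^2 + |u_k|^2), which is summable with sum at most (2 pi)^d C (||g||^2 + ||u||^2) by Bessel's
   inequality.  The Weierstrass M-test justifies differentiating twice term by term, so the Hessian
   of the data term has norm O(||g||^2 + ||u||^2), too small to destroy the strong convexity of phi. *)

section \<open>Differentiation of series and bounds on Hessians\<close>

lemma (in bounded_bilinear) uniform_limit_left:
  assumes "uniform_limit S g l F" and "0 < e"
  shows "\<forall>\<^sub>F n in F. \<forall>y\<in>S. \<forall>h. norm (prod (g n y) h - prod (l y) h) \<le> e * norm h"
proof -
  obtain K where K: "K > 0" "\<And>a b. norm (prod a b) \<le> norm a * norm b * K"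
    using pos_bounded by blast
  have "\<forall>\<^sub>F n in F. \<forall>y\<in>S. dist (g n y) (l y) < e / K"
    using uniform_limitD[OF assms(1)] assms(2) K(1) by simp
  then show ?thesis
  proof (rule eventually_mono, intro ballI allI)
    fix n y h assume "\<forall>y\<in>S. dist (g n y) (l y) < e / K" and "y \<in> S"
    then have "norm (g n y - l y) \<le> e / K"
      by (auto simp: dist_norm intro: less_imp_le)
    have "norm (prod (g n y) h - prod (l y) h) \<le> norm (g n y - l y) * norm h * K"
      unfolding diff_left[symmetric] by (rule K(2))
    also have "\<dots> \<le> e / K * norm h * K"
      using \<open>norm (g n y - l y) \<le> e / K\<close> K(1) by (intro mult_right_mono) auto
    finally show "norm (prod (g n y) h - prod (l y) h) \<le> e * norm h"
      using K(1) by simp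
  qed
qed

lemma has_derivative_suminf_bilinear:
  fixes f :: "nat \<Rightarrow> 'a::real_normed_vector \<Rightarrow> 'b::banach" and F :: "nat \<Rightarrow> 'a \<Rightarrow> 'c::banach"
  assumes "bounded_bilinear L" and S: "open S" "convex S"
    and f: "\<And>n x. x \<in> S \<Longrightarrow> (f n has_derivative L (F n x)) (at x)"
    and f_le: "\<And>n x. x \<in> S \<Longrightarrow> norm (f n x) \<le> w n"
    and F_le: "\<And>n x. x \<in> S \<Longrightarrow> norm (F n x) \<le> w n"
    and "summable w" and x: "x \<in> S"
  shows "((\<lambda>x. \<Sum>n. f n x) has_derivative L (\<Sum>n. F n x)) (at x)"
proof -
  interpret bounded_bilinear L by fact
  have F_unif: "uniform_limit S (\<lambda>n y. \<Sum>i<n. F i y) (\<lambda>y. \<Sum>i. F i y) sequentially"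
    using F_le \<open>summable w\<close> by (rule Weierstrass_m_test)
  have "\<exists>g. \<forall>y\<in>S. (\<lambda>n. f n y) sums g y \<and> (g has_derivative L (\<Sum>n. F n y)) (at y within S)"
  proof (rule has_derivative_series[OF S(2) _ _ x])
    show "(f n has_derivative L (F n y)) (at y within S)" if "y \<in> S" for n y
      using f[OF that] by (rule has_derivative_subset) simp
    show "(\<lambda>n. f n x) sums (\<Sum>n. f n x)"
      by (rule summable_sums, rule summable_comparison_test'[OF \<open>summable w\<close>]) (use f_le[OF x] in auto)
    show "\<forall>\<^sub>F n in sequentially. \<forall>y\<in>S. \<forall>h. norm ((\<Sum>i<n. L (F i y) h) - L (\<Sum>n. F n y) h) \<le> e * norm h"
      if "e > 0" for e
      using uniform_limit_left[OF F_unif that] by (simp add: sum_left)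
  qed
  then obtain g where g: "\<And>y. y \<in> S \<Longrightarrow> (\<lambda>n. f n y) sums g y"
    and g': "(g has_derivative L (\<Sum>n. F n x)) (at x within S)"
    using x by blast
  show ?thesis
  proof (rule has_derivative_transform_within_open[OF _ S(1) x])
    show "(g has_derivative L (\<Sum>n. F n x)) (at x)"
      using g' by (simp add: at_within_open[OF x S(1)])
    show "g y = (\<Sum>n. f n y)" if "y \<in> S" for y
      using g[OF that] by (rule sums_unique)
  qed
qed

lemma bounded_bilinear_matrix_vector_mult:
  "bounded_bilinear ((*v) :: real^'n^'m \<Rightarrow> real^'n \<Rightarrow> real^'m)"
proof -
  have "bilinear ((*v) :: real^'n^'m \<Rightarrow> real^'n \<Rightarrow> real^'m)"
    unfolding bilinear_def
    by (auto intro!: linearI simp: matrix_vector_right_distrib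
        matrix_vector_mult_scaleR matrix_vector_mult_add_rdistrib scaleR_matrix_vector_assoc)
  then show ?thesis
    by (simp add: bilinear_conv_bounded_bilinear)
qed

lemma grad_hess_suminf:
  fixes f :: "nat \<Rightarrow> real^2 \<Rightarrow> real" and G :: "nat \<Rightarrow> real^2 \<Rightarrow> real^2"
    and H :: "nat \<Rightarrow> real^2 \<Rightarrow> real^2^2"
  assumes S: "open S" "convex S"
    and f: "\<And>n x. x \<in> S \<Longrightarrow> (f n has_derivative (\<lambda>v. G n x \<bullet> v)) (at x)"
    and G: "\<And>n x. x \<in> S \<Longrightarrow> (G n has_derivative (\<lambda>v. H n x *v v)) (at x)"
    and f_le: "\<And>n x. x \<in> S \<Longrightarrow> \<bar>f n x\<bar> \<le> w n"
    and G_le: "\<And>n x. x \<in> S \<Longrightarrow> norm (G n x) \<le> w n"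
    and H_le: "\<And>n x. x \<in> S \<Longrightarrow> norm (H n x) \<le> w n"
    and w: "summable w"
  shows "grad_hess (\<lambda>x. \<Sum>n. f n x) (\<lambda>x. \<Sum>n. G n x) (\<lambda>x. \<Sum>n. H n x) S"
    and "\<And>x. x \<in> S \<Longrightarrow> norm (\<Sum>n. H n x) \<le> (\<Sum>n. w n)"
proof -
  show "grad_hess (\<lambda>x. \<Sum>n. f n x) (\<lambda>x. \<Sum>n. G n x) (\<lambda>x. \<Sum>n. H n x) S"
    unfolding grad_hess_def
  proof (intro ballI conjI)
    fix x assume "x \<in> S"
    show "((\<lambda>x. \<Sum>n. f n x) has_derivative (\<lambda>v. (\<Sum>n. G n x) \<bullet> v)) (at x)"
      using has_derivative_suminf_bilinear[OF bounded_bilinear_inner S f _ G_le w \<open>x \<in> S\<close>] f_le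
      by simp
    show "((\<lambda>x. \<Sum>n. G n x) has_derivative (\<lambda>v. (\<Sum>n. H n x) *v v)) (at x)"
      by (rule has_derivative_suminf_bilinear[OF bounded_bilinear_matrix_vector_mult S G G_le H_le w \<open>x \<in> S\<close>])
  qed
  show "norm (\<Sum>n. H n x) \<le> (\<Sum>n. w n)" if "x \<in> S" for x
  proof -
    have "summable (\<lambda>n. norm (H n x))"
      by (rule summable_comparison_test'[OF w]) (use H_le that in auto)
    then have "norm (\<Sum>n. H n x) \<le> (\<Sum>n. norm (H n x))"
      by (rule summable_norm)
    also have "\<dots> \<le> (\<Sum>n. w n)"
      using H_le that \<open>summable (\<lambda>n. norm (H n x))\<close> w by (intro suminf_le) auto
    finally show ?thesis .
  qed
qed

lemma grad_hess_cong:
  assumes "grad_hess f G H S" "open S" "\<And>x. x \<in> S \<Longrightarrow> f x = f' x"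
  shows "grad_hess f' G H S"
  using assms unfolding grad_hess_def
  by (blast intro: has_derivative_transform_within_open)

lemma grad_hess_scaled_add:
  assumes "grad_hess f Gf Hf S" and "grad_hess \<phi> G H S"
  shows "grad_hess (\<lambda>x. c * f x + \<phi> x) (\<lambda>x. c *\<^sub>R Gf x + G x) (\<lambda>x. c *\<^sub>R Hf x + H x) S"
  using assms unfolding grad_hess_def
  by (auto intro!: derivative_eq_intros
      simp: inner_add_left matrix_vector_mult_add_rdistrib scaleR_matrix_vector_assoc)

definition outer_prod :: "real^'n \<Rightarrow> real^'m \<Rightarrow> real^'m^'n" where
  "outer_prod g h = (\<chi> i j. g $ i * h $ j)"

lemma outer_prod_mult_vec: "outer_prod g h *v v = (h \<bullet> v) *\<^sub>R g"
  by (simp add: outer_prod_def vec_eq_iff matrix_vector_mult_def inner_vec_def sum_distrib_left ac_simps)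

lemma norm_outer_prod: "norm (outer_prod g h) = norm g * norm h"
proof -
  have row: "outer_prod g h $ i = g $ i *\<^sub>R h" for i
    by (simp add: outer_prod_def vec_eq_iff)
  have "norm (outer_prod g h) = L2_set (\<lambda>i. norm (outer_prod g h $ i)) UNIV"
    by (simp only: norm_vec_def)
  also have "\<dots> = L2_set (\<lambda>i. \<bar>g $ i\<bar> * norm h) UNIV"
    by (simp only: row norm_scaleR)
  also have "\<dots> = L2_set (\<lambda>i. \<bar>g $ i\<bar>) UNIV * norm h"
    by (rule L2_set_left_distrib[symmetric]) simp
  also have "L2_set (\<lambda>i. \<bar>g $ i\<bar>) UNIV = norm g"
    by (simp add: norm_vec_def)
  finally show ?thesis .
qed

lemma norm_matrix_vector_mult_le:
  fixes A :: "real^'n^'m"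
  shows "norm (A *v v) \<le> norm A * norm v"
proof -
  have "\<bar>(A *v v) $ i\<bar> \<le> norm (A $ i) * norm v" for i
    using Cauchy_Schwarz_ineq2[of "A $ i" v]
    by (simp add: matrix_vector_mult_def inner_vec_def)
  then have "L2_set (\<lambda>i. \<bar>(A *v v) $ i\<bar>) UNIV \<le> L2_set (\<lambda>i. norm (A $ i) * norm v) UNIV"
    by (intro L2_set_mono) auto
  then show ?thesis
    by (simp add: norm_vec_def L2_set_left_distrib[symmetric])
qed

lemma quadratic_form_perturbation:
  fixes A H :: "real^'n^'n"
  assumes "\<theta> * (v \<bullet> v) \<le> v \<bullet> (H *v v)" and "norm A \<le> \<epsilon>"
  shows "(\<theta> - \<epsilon>) * (v \<bullet> v) \<le> v \<bullet> ((A + H) *v v)"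
proof -
  have "\<bar>v \<bullet> (A *v v)\<bar> \<le> norm v * (norm A * norm v)"
    using Cauchy_Schwarz_ineq2[of v "A *v v"] norm_matrix_vector_mult_le[of A v]
    by (simp add: mult_left_mono order_trans)
  also have "\<dots> = norm A * (v \<bullet> v)"
    by (simp add: power2_eq_square flip: power2_norm_eq_inner)
  also have "\<dots> \<le> \<epsilon> * (v \<bullet> v)"
    using assms(2) by (rule mult_right_mono) simp
  finally show ?thesis
    using assms(1) by (simp add: algebra_simps)
qed

lemma vec_nth_has_derivative [derivative_intros]:
  "((\<lambda>x. x $ i) has_derivative (\<lambda>v. v $ i)) F"
  by (rule bounded_linear.has_derivative[OF bounded_linear_vec_nth has_derivative_ident])

section \<open>Orthogonality and Bessel's inequality on the torus\<close>

lemma set_integral_exp_int_multiple: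
  fixes c :: int
  shows "set_integrable lborel {0..2*pi} (\<lambda>t::real. exp (\<i> * of_real (of_int c * t)))"
    and "(LINT t:{0..2*pi}|lborel. exp (\<i> * of_real (of_int c * t))) = (if c = 0 then 2 * pi else 0)"
proof -
  show int: "set_integrable lborel {0..2*pi} (\<lambda>t::real. exp (\<i> * of_real (of_int c * t)))"
    by (rule borel_integrable_atLeastAtMost') (intro continuous_intros)
  define F where "F t = exp (\<i> * of_int c * t) / (\<i> * of_int c)" for t :: complex
  have "((\<lambda>t::real. exp (\<i> * of_real (of_int c * t))) has_integral (if c = 0 then 2 * pi else 0)) {0..2*pi}"
  proof (cases "c = 0")
    case True
    then show ?thesis
      using has_integral_const_real[of "1::complex" 0 "2*pi"] by (simp add: scaleR_conv_of_real)
  next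
    case False
    have "((\<lambda>t. F (of_real t)) has_vector_derivative exp (\<i> * of_real (of_int c * t))) (at t within {0..2*pi})" for t
    proof -
      have "(F has_field_derivative exp (\<i> * of_int c * of_real t)) (at (of_real t))"
        unfolding F_def using False by (auto intro!: derivative_eq_intros)
      then show ?thesis
        using has_vector_derivative_real_field by (simp add: mult.assoc)
    qed
    then have "((\<lambda>t::real. exp (\<i> * of_real (of_int c * t))) has_integral F (2 * pi) - F 0) {0..2*pi}"
      using fundamental_theorem_of_calculus[of 0 "2*pi" "\<lambda>t. F (of_real t)"] by simp
    moreover have "exp (\<i> * of_int c * (2 * pi)) = 1"
      using exp_integer_2pi[of "of_int c"] by (simp add: algebra_simps)
    ultimately show ?thesis
      using False by (simp add: F_def)
  qed
  then show "(LINT t:{0..2*pi}|lborel. exp (\<i> * of_real (of_int c * t))) = (if c = 0 then 2 * pi else 0)"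
    using set_borel_integral_eq_integral(2)[OF int] by (simp add: integral_unique)
qed

lemma lborel_integral_prod_Basis:
  fixes \<phi> :: "'a::euclidean_space \<Rightarrow> real \<Rightarrow> 'c::{real_normed_field,banach,second_countable_topology}"
  assumes \<phi>: "\<And>b. b \<in> Basis \<Longrightarrow> integrable lborel (\<phi> b)"
  shows "integrable lborel (\<lambda>x. \<Prod>b\<in>Basis. \<phi> b (x \<bullet> b))"
    and "(\<integral>x. (\<Prod>b\<in>Basis. \<phi> b (x \<bullet> b)) \<partial>lborel) = (\<Prod>b\<in>Basis. integral\<^sup>L lborel (\<phi> b))"
proof -
  interpret product_sigma_finite "\<lambda>_::'a. lborel :: real measure"
    proof qed
  define T where "T f = (\<Sum>b\<in>Basis. f b *\<^sub>R b)" for f :: "'a \<Rightarrow> real"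
  have T: "T \<in> measurable (\<Pi>\<^sub>M b\<in>Basis. lborel) borel"
    unfolding T_def by measurable
  have meas: "(\<lambda>x. \<Prod>b\<in>Basis. \<phi> b (x \<bullet> b)) \<in> borel_measurable borel"
  proof (intro borel_measurable_prod)
    fix b :: 'a assume "b \<in> Basis"
    then have "\<phi> b \<in> borel_measurable borel"
      using borel_measurable_integrable[OF \<phi>] by simp
    then show "(\<lambda>x. \<phi> b (x \<bullet> b)) \<in> borel_measurable borel"
      by measurable
  qed
  have T_inner: "T f \<bullet> b = f b" if "b \<in> Basis" for f b
    using that by (simp add: T_def inner_sum_left inner_Basis if_distrib cong: if_cong)
  have "integrable (\<Pi>\<^sub>M b\<in>Basis. lborel) (\<lambda>f. \<Prod>b\<in>Basis. \<phi> b (f b))"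
    using \<phi> by (intro product_integrable_prod) auto
  then show "integrable lborel (\<lambda>x. \<Prod>b\<in>Basis. \<phi> b (x \<bullet> b))"
    by (subst lborel_eq) (simp add: integrable_distr_eq[OF T[unfolded T_def] meas] T_inner[unfolded T_def])
  have "(\<integral>x. (\<Prod>b\<in>Basis. \<phi> b (x \<bullet> b)) \<partial>lborel) = (\<integral>f. (\<Prod>b\<in>Basis. \<phi> b (f b)) \<partial>(\<Pi>\<^sub>M b\<in>Basis. lborel))"
    by (subst lborel_eq) (simp add: integral_distr[OF T[unfolded T_def] meas] T_inner[unfolded T_def])
  also have "\<dots> = (\<Prod>b\<in>Basis. integral\<^sup>L lborel (\<phi> b))"
    using \<phi> by (intro product_integral_prod) auto
  finally show "(\<integral>x. (\<Prod>b\<in>Basis. \<phi> b (x \<bullet> b)) \<partial>lborel) = (\<Prod>b\<in>Basis. integral\<^sup>L lborel (\<phi> b))" .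
qed

definition torus_measure :: "(real^'d) measure" where
  "torus_measure = restrict_space lebesgue torus_cube"

definition torus_exp :: "real^'d \<Rightarrow> real^'d \<Rightarrow> complex" where
  "torus_exp k x = exp (\<i> * of_real (k \<bullet> x))"

lemma torus_cube_sets [measurable]:
  "torus_cube \<in> sets lborel" "torus_cube \<in> sets lebesgue"
  by (simp_all add: torus_cube_def)

lemma finite_measure_torus_measure: "finite_measure torus_measure"
proof (rule finite_measureI)
  have "emeasure lborel torus_cube < \<infinity>"
    unfolding torus_cube_def by (rule emeasure_bounded_finite) simp
  then show "emeasure torus_measure (space torus_measure) \<noteq> \<infinity>"
    by (simp add: torus_measure_def emeasure_restrict_space main_part[OF torus_cube_sets(1)] less_top)
qed

lemma integral_torus_measure:
  fixes f :: "real^'d \<Rightarrow> 'b::{banach,second_countable_topology}"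
  shows "integral\<^sup>L torus_measure f = (LINT x:torus_cube|lebesgue. f x)"
  by (simp add: torus_measure_def integral_restrict_space set_lebesgue_integral_def)

lemma integrable_torus_measure_iff:
  fixes f :: "real^'d \<Rightarrow> 'b::{banach,second_countable_topology}"
  shows "integrable torus_measure f \<longleftrightarrow> set_integrable lebesgue torus_cube f"
  by (simp add: torus_measure_def integrable_restrict_space set_integrable_def)

lemma borel_measurable_torus_measure_iff:
  fixes f :: "real^'d \<Rightarrow> 'b::real_normed_vector"
  shows "f \<in> borel_measurable torus_measure \<longleftrightarrow> set_borel_measurable lebesgue torus_cube f"
  by (simp add: torus_measure_def set_borel_measurable_def borel_measurable_restrict_space_iff)

lemma torus_exp_measurable [measurable]: "torus_exp k \<in> borel_measurable torus_measure"
proof -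
  have "torus_exp k \<in> borel_measurable borel"
    unfolding torus_exp_def by (intro borel_measurable_continuous_onI continuous_intros)
  then show ?thesis
    unfolding torus_measure_def
    by (intro measurable_restrict_space1) (simp add: measurable_completion cong: measurable_cong_sets)
qed

lemma torus_exp_mult_cnj: "torus_exp k x * cnj (torus_exp l x) = torus_exp (k - l) x"
  by (simp add: torus_exp_def exp_cnj inner_diff_left flip: exp_add) (simp add: algebra_simps)

lemma torus_exp_cnj: "cnj (torus_exp k x) = torus_exp (- k) x"
  by (simp add: torus_exp_def exp_cnj)

lemma lattice_diff: "k \<in> lattice \<Longrightarrow> l \<in> lattice \<Longrightarrow> k - l \<in> lattice"
  by (auto simp: lattice_def)

lemma of_int_floor_inner_lattice:
  "k \<in> lattice \<Longrightarrow> b \<in> Basis \<Longrightarrow> of_int \<lfloor>k \<bullet> b\<rfloor> = (k::real^'d) \<bullet> b"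
  using frac_eq_0_iff[of "k \<bullet> b"] by (auto simp: Basis_vec_def inner_axis lattice_def frac_def)

lemma torus_cube_iff_Basis: "x \<in> torus_cube \<longleftrightarrow> (\<forall>b\<in>Basis. x \<bullet> b \<in> {0..2*pi})"
  by (auto simp: torus_cube_def mem_box Basis_vec_def inner_axis)

lemma indicator_torus_cube_mult_torus_exp:
  assumes "k \<in> lattice"
  shows "indicator torus_cube x *\<^sub>R torus_exp k x
    = (\<Prod>b\<in>Basis. indicator {0..2*pi} (x \<bullet> b) *\<^sub>R exp (\<i> * of_real (of_int \<lfloor>k \<bullet> b\<rfloor> * (x \<bullet> b))))"
proof -
  have "k \<bullet> x = (\<Sum>b\<in>Basis. (k \<bullet> b) * (x \<bullet> b))"
    by (rule euclidean_inner)
  also have "\<dots> = (\<Sum>b\<in>Basis. of_int \<lfloor>k \<bullet> b\<rfloor> * (x \<bullet> b))"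
    by (intro sum.cong) (simp_all add: of_int_floor_inner_lattice[OF assms])
  finally have "k \<bullet> x = (\<Sum>b\<in>Basis. of_int \<lfloor>k \<bullet> b\<rfloor> * (x \<bullet> b))" .
  moreover have "indicator torus_cube x = (\<Prod>b\<in>Basis. indicator {0..2*pi} (x \<bullet> b) :: real)"
    by (simp add: indicator_def torus_cube_iff_Basis)
  ultimately show ?thesis
    by (simp add: torus_exp_def scaleR_conv_of_real prod.distrib sum_distrib_left exp_sum flip: of_real_prod)
qed

lemma torus_exp_integral:
  fixes k :: "real^'d"
  assumes k: "k \<in> lattice"
  shows "integrable torus_measure (torus_exp k)"
    and "integral\<^sup>L torus_measure (torus_exp k) = (if k = 0 then (2 * pi) ^ CARD('d) else 0)"
proof -
  define \<phi> where "\<phi> = (\<lambda>b t. indicator {0..2*pi} t *\<^sub>R exp (\<i> * of_real (of_int \<lfloor>k \<bullet> b\<rfloor> * t)))"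
  have \<phi>: "integrable lborel (\<phi> b)" for b
    using set_integral_exp_int_multiple(1) unfolding \<phi>_def set_integrable_def .
  have split: "indicator torus_cube x *\<^sub>R torus_exp k x = (\<Prod>b\<in>Basis. \<phi> b (x \<bullet> b))" for x
    unfolding \<phi>_def by (rule indicator_torus_cube_mult_torus_exp[OF k])
  have meas: "(\<lambda>x. indicator torus_cube x *\<^sub>R torus_exp k x) \<in> borel_measurable lborel"
    unfolding torus_exp_def by measurable
  have "integrable lborel (\<lambda>x. indicator torus_cube x *\<^sub>R torus_exp k x)"
    unfolding split by (rule lborel_integral_prod_Basis(1)[OF \<phi>])
  then show "integrable torus_measure (torus_exp k)"
    unfolding integrable_torus_measure_iff set_integrable_def using integrable_completion[OF meas] by simp
  have "integral\<^sup>L torus_measure (torus_exp k) = (\<integral>x. indicator torus_cube x *\<^sub>R torus_exp k x \<partial>lborel)"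
    by (simp add: integral_torus_measure set_lebesgue_integral_def integral_completion[OF meas])
  also have "\<dots> = (\<Prod>b\<in>Basis. integral\<^sup>L lborel (\<phi> b))"
    unfolding split by (rule lborel_integral_prod_Basis(2)[OF \<phi>])
  also have "\<dots> = of_real (\<Prod>b\<in>(Basis::(real^'d) set). if \<lfloor>k \<bullet> b\<rfloor> = 0 then 2 * pi else 0)"
    using set_integral_exp_int_multiple(2) by (simp add: \<phi>_def set_lebesgue_integral_def)
  also have "(\<Prod>b\<in>(Basis::(real^'d) set). if \<lfloor>k \<bullet> b\<rfloor> = 0 then 2 * pi else 0)
      = (if k = 0 then (2 * pi) ^ CARD('d) else 0)"
  proof (cases "k = 0")
    case False
    then obtain b where "b \<in> Basis" "k \<bullet> b \<noteq> 0"
      using euclidean_all_zero_iff by blast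
    then show ?thesis
      using False of_int_floor_inner_lattice[OF k] by force
  qed simp
  finally show "integral\<^sup>L torus_measure (torus_exp k) = (if k = 0 then (2 * pi) ^ CARD('d) else 0)"
    by simp
qed

lemma torus_exp_orthogonal:
  fixes k l :: "real^'d"
  assumes "k \<in> lattice" "l \<in> lattice"
  shows "integrable torus_measure (\<lambda>x. torus_exp k x * cnj (torus_exp l x))"
    and "integral\<^sup>L torus_measure (\<lambda>x. torus_exp k x * cnj (torus_exp l x))
           = (if k = l then (2 * pi) ^ CARD('d) else 0)"
  using torus_exp_integral[OF lattice_diff[OF assms]] by (simp_all add: torus_exp_mult_cnj)

lemma L2_torus_integrable:
  assumes "L2_torus u"
  shows "u \<in> borel_measurable torus_measure"
    and "integrable torus_measure (\<lambda>x. (cmod (u x))^2)"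
    and "integrable torus_measure u"
proof -
  interpret finite_measure torus_measure
    by (rule finite_measure_torus_measure)
  show meas: "u \<in> borel_measurable torus_measure"
    using assms by (simp add: L2_torus_def borel_measurable_torus_measure_iff)
  show sq: "integrable torus_measure (\<lambda>x. (cmod (u x))^2)"
    using assms by (simp add: L2_torus_def integrable_torus_measure_iff)
  have "integrable torus_measure (\<lambda>x. u x ^ 2)"
    using sq meas by (subst integrable_norm_iff[symmetric]) (auto simp: norm_power)
  then show "integrable torus_measure u"
    using meas by (rule square_integrable_imp_integrable[rotated])
qed

lemma L2_norm_torus_nonneg: "0 \<le> L2_norm_torus u"
  and L2_norm_torus_square: "(L2_norm_torus u)^2 = integral\<^sup>L torus_measure (\<lambda>x. (cmod (u x))^2)"
proof -
  have "0 \<le> integral\<^sup>L torus_measure (\<lambda>x. (cmod (u x))^2)"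
    by (rule integral_nonneg_AE) simp
  then show "0 \<le> L2_norm_torus u" "(L2_norm_torus u)^2 = integral\<^sup>L torus_measure (\<lambda>x. (cmod (u x))^2)"
    by (simp_all add: L2_norm_torus_def integral_torus_measure)
qed

lemma fourier_coeff_integral:
  assumes "L2_torus u"
  shows "integrable torus_measure (\<lambda>x. u x * cnj (torus_exp k x))"
    and "integral\<^sup>L torus_measure (\<lambda>x. u x * cnj (torus_exp k x)) = fourier_coeff u k"
proof -
  show "integrable torus_measure (\<lambda>x. u x * cnj (torus_exp k x))"
  proof (rule Bochner_Integration.integrable_bound[OF L2_torus_integrable(3)[OF assms]])
    show "(\<lambda>x. u x * cnj (torus_exp k x)) \<in> borel_measurable torus_measure"
      using L2_torus_integrable(1)[OF assms] unfolding torus_exp_cnj by measurable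
  qed (simp add: norm_mult torus_exp_def)
  show "integral\<^sup>L torus_measure (\<lambda>x. u x * cnj (torus_exp k x)) = fourier_coeff u k"
    by (simp add: integral_torus_measure fourier_coeff_def torus_exp_def exp_cnj)
qed

lemma integral_mult_cnj_trig_sum:
  assumes "L2_torus u" "finite F"
  shows "integrable torus_measure (\<lambda>x. u x * cnj (\<Sum>k\<in>F. c k * torus_exp k x))"
    and "integral\<^sup>L torus_measure (\<lambda>x. u x * cnj (\<Sum>k\<in>F. c k * torus_exp k x))
           = (\<Sum>k\<in>F. cnj (c k) * fourier_coeff u k)"
proof -
  have eq: "u x * cnj (\<Sum>k\<in>F. c k * torus_exp k x) = (\<Sum>k\<in>F. cnj (c k) * (u x * cnj (torus_exp k x)))" for x
    by (simp add: sum_distrib_left ac_simps)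
  show "integrable torus_measure (\<lambda>x. u x * cnj (\<Sum>k\<in>F. c k * torus_exp k x))"
    unfolding eq using fourier_coeff_integral(1)[OF assms(1)] by auto
  show "integral\<^sup>L torus_measure (\<lambda>x. u x * cnj (\<Sum>k\<in>F. c k * torus_exp k x))
      = (\<Sum>k\<in>F. cnj (c k) * fourier_coeff u k)"
    unfolding eq using fourier_coeff_integral[OF assms(1)] by (subst Bochner_Integration.integral_sum) auto
qed

lemma integral_trig_sum_mult_cnj:
  fixes c :: "real^'d \<Rightarrow> complex"
  assumes "finite F" "F \<subseteq> lattice"
  defines "P \<equiv> \<lambda>x. \<Sum>k\<in>F. c k * torus_exp k x"
  shows "integrable torus_measure (\<lambda>x. P x * cnj (P x))"
    and "integral\<^sup>L torus_measure (\<lambda>x. P x * cnj (P x))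
           = of_real ((2 * pi) ^ CARD('d) * (\<Sum>k\<in>F. (cmod (c k))^2))"
proof -
  have eq: "P x * cnj (P x) = (\<Sum>k\<in>F. \<Sum>l\<in>F. c k * cnj (c l) * (torus_exp k x * cnj (torus_exp l x)))" for x
    by (simp add: P_def sum_product ac_simps)
  show "integrable torus_measure (\<lambda>x. P x * cnj (P x))"
    unfolding eq using assms(2)
    by (intro Bochner_Integration.integrable_sum integrable_mult_right torus_exp_orthogonal(1)[where 'd='d]) auto
  have "integral\<^sup>L torus_measure (\<lambda>x. P x * cnj (P x))
      = (\<Sum>k\<in>F. \<Sum>l\<in>F. c k * cnj (c l) * (if k = l then (2 * pi) ^ CARD('d) else 0))"
    unfolding eq using torus_exp_orthogonal[where 'd='d] assms(2)
    by (subst Bochner_Integration.integral_sum) (auto intro!: sum.cong simp: subset_iff)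
  also have "\<dots> = of_real ((2 * pi) ^ CARD('d) * (\<Sum>k\<in>F. (cmod (c k))^2))"
    using assms(1) by (simp add: if_distrib sum_distrib_left ac_simps flip: complex_norm_square cong: if_cong)
  finally show "integral\<^sup>L torus_measure (\<lambda>x. P x * cnj (P x))
      = of_real ((2 * pi) ^ CARD('d) * (\<Sum>k\<in>F. (cmod (c k))^2))" .
qed

lemma bessel_inequality:
  fixes u :: "real^'d \<Rightarrow> complex"
  assumes u: "L2_torus u" and F: "finite F" "F \<subseteq> lattice"
  shows "(\<Sum>k\<in>F. (cmod (fourier_coeff u k))^2) \<le> (2 * pi) ^ CARD('d) * (L2_norm_torus u)^2"
proof -
  define V :: real where "V = (2 * pi) ^ CARD('d)"
  define \<Sigma> where "\<Sigma> = (\<Sum>k\<in>F. (cmod (fourier_coeff u k))^2)"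
  define P where "P x = (\<Sum>k\<in>F. fourier_coeff u k / of_real V * torus_exp k x)" for x
  have "V > 0"
    by (simp add: V_def)
  note uP = integral_mult_cnj_trig_sum[OF u F(1), of "\<lambda>k. fourier_coeff u k / of_real V", folded P_def]
  note PP = integral_trig_sum_mult_cnj[OF F, of "\<lambda>k. fourier_coeff u k / of_real V", folded P_def V_def]
  have "0 \<le> integral\<^sup>L torus_measure (\<lambda>x. (cmod (u x - P x))^2)"
    by (rule integral_nonneg_AE) simp
  also have "\<dots> = integral\<^sup>L torus_measure (\<lambda>x. (cmod (u x))^2)
      - 2 * Re (integral\<^sup>L torus_measure (\<lambda>x. u x * cnj (P x))) + Re (integral\<^sup>L torus_measure (\<lambda>x. P x * cnj (P x)))"
  proof -
    have "(cmod (u x - P x))^2 = (cmod (u x))^2 - 2 * Re (u x * cnj (P x)) + Re (P x * cnj (P x))" for x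
      by (simp only: cmod_power2) (simp add: power2_eq_square algebra_simps)
    then show ?thesis
      using L2_torus_integrable(2)[OF u] uP(1) PP(1) by (simp del: times_complex.sel)
  qed
  also have "\<dots> = (L2_norm_torus u)^2 - \<Sigma> / V"
  proof -
    have "integral\<^sup>L torus_measure (\<lambda>x. u x * cnj (P x)) = of_real (\<Sigma> / V)"
      unfolding uP(2) by (simp add: \<Sigma>_def sum_divide_distrib mult.commute flip: complex_norm_square)
    moreover have "integral\<^sup>L torus_measure (\<lambda>x. P x * cnj (P x)) = of_real (\<Sigma> / V)"
      unfolding PP(2) using \<open>V > 0\<close>
      by (simp add: \<Sigma>_def norm_divide power_divide sum_divide_distrib[symmetric] power2_eq_square)
    ultimately show ?thesis
      by (simp add: L2_norm_torus_square)
  qed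
  finally show ?thesis
    using \<open>V > 0\<close> by (simp add: \<Sigma>_def V_def field_simps)
qed

lemma lattice_countable: "countable (lattice :: (real^'d) set)"
proof -
  have "lattice \<subseteq> range (\<lambda>f::'d \<Rightarrow> int. \<chi> i. of_int (f i) :: real^'d)"
  proof
    fix k :: "real^'d" assume "k \<in> lattice"
    then have "\<forall>i. \<exists>z::int. k $ i = of_int z"
      unfolding lattice_def by (auto elim!: Ints_cases)
    then obtain f where "\<And>i. k $ i = of_int (f i)"
      by metis
    then show "k \<in> range (\<lambda>f::'d \<Rightarrow> int. \<chi> i. of_int (f i) :: real^'d)"
      by (auto simp: vec_eq_iff intro!: image_eqI[of _ _ f])
  qed
  then show ?thesis
    by (rule countable_subset) simp
qed

lemma lattice_infinite: "infinite (lattice :: (real^'d) set)"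
proof
  assume "finite (lattice :: (real^'d) set)"
  moreover have "range (\<lambda>n::nat. (\<chi> i. of_nat n) :: real^'d) \<subseteq> lattice"
    by (auto simp: lattice_def)
  moreover have "inj (\<lambda>n::nat. (\<chi> i. of_nat n) :: real^'d)"
    by (auto intro!: injI simp: vec_eq_iff)
  ultimately show False
    using finite_imageD finite_subset by blast
qed

lemma ln_norm_lattice_nonneg:
  assumes "k \<in> lattice"
  shows "0 \<le> ln (norm (k :: real^'d))"
proof (cases "k = 0")
  case False
  then obtain i where "k $ i \<noteq> 0"
    by (auto simp: vec_eq_iff)
  moreover have "k $ i \<in> \<int>"
    using assms by (simp add: lattice_def)
  ultimately have "1 \<le> \<bar>k $ i\<bar>"
    by (rule Ints_nonzero_abs_ge1[rotated])
  also have "\<dots> \<le> norm k"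
    by (rule component_le_norm_cart)
  finally show ?thesis
    by simp
qed simp

lemma fourier_coeff_square_summable:
  fixes u :: "real^'d \<Rightarrow> complex"
  assumes u: "L2_torus u" and e: "bij_betw e UNIV lattice"
  shows "summable (\<lambda>n. (cmod (fourier_coeff u (e n)))^2)"
    and "(\<Sum>n. (cmod (fourier_coeff u (e n)))^2) \<le> (2 * pi) ^ CARD('d) * (L2_norm_torus u)^2"
proof -
  have partial: "(\<Sum>i<n. (cmod (fourier_coeff u (e i)))^2) \<le> (2 * pi) ^ CARD('d) * (L2_norm_torus u)^2" for n
  proof -
    have "inj_on e {..<n}"
      using e by (auto simp: bij_betw_def intro: inj_on_subset)
    then have "(\<Sum>i<n. (cmod (fourier_coeff u (e i)))^2) = (\<Sum>k\<in>e ` {..<n}. (cmod (fourier_coeff u k))^2)"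
      by (simp add: sum.reindex)
    also have "\<dots> \<le> (2 * pi) ^ CARD('d) * (L2_norm_torus u)^2"
      using e by (intro bessel_inequality[OF u]) (auto simp: bij_betw_def)
    finally show ?thesis .
  qed
  show "summable (\<lambda>n. (cmod (fourier_coeff u (e n)))^2)"
    by (rule summableI_nonneg_bounded[OF _ partial]) simp
  then show "(\<Sum>n. (cmod (fourier_coeff u (e n)))^2) \<le> (2 * pi) ^ CARD('d) * (L2_norm_torus u)^2"
    by (rule suminf_le_const[OF _ partial])
qed

lemma fourier_coeff_squares_summable:
  fixes g u :: "real^'d \<Rightarrow> complex"
  assumes g: "L2_torus g" and u: "L2_torus u" and e: "bij_betw e UNIV lattice"
  shows "summable (\<lambda>n. (cmod (fourier_coeff g (e n)))^2 + (cmod (fourier_coeff u (e n)))^2)"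
    and "(\<Sum>n. (cmod (fourier_coeff g (e n)))^2 + (cmod (fourier_coeff u (e n)))^2)
           \<le> (2 * pi) ^ CARD('d) * ((L2_norm_torus g)^2 + (L2_norm_torus u)^2)"
  using fourier_coeff_square_summable[OF g e] fourier_coeff_square_summable[OF u e]
  by (simp_all add: summable_add suminf_add[symmetric] distrib_left add_mono)

section \<open>The filter factor\<close>

(* With x = (s, \<alpha>) and L = ln |k| this is the factor \<alpha> / (\<alpha> + |k|^(2s)) of S_op. *)
definition filter_factor :: "real \<Rightarrow> real^2 \<Rightarrow> real" where
  "filter_factor L x = x $ 2 / (x $ 2 + exp (2 * x $ 1 * L))"

(* The gradient of ln (a / (1 - a)) = ln \<alpha> - 2 s L, where a = filter_factor L x; as a is a logistic
   function of this quantity, its own gradient is a (1 - a) times this one. *)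
definition filter_logit_grad :: "real \<Rightarrow> real^2 \<Rightarrow> real^2" where
  "filter_logit_grad L x = (- 2 * L) *\<^sub>R axis 1 1 + (1 / x $ 2) *\<^sub>R axis 2 1"

lemma inner_filter_logit_grad: "filter_logit_grad L x \<bullet> v = - 2 * L * v $ 1 + v $ 2 / x $ 2"
  by (simp add: filter_logit_grad_def inner_axis' algebra_simps)

definition filter_factor_grad :: "real \<Rightarrow> real^2 \<Rightarrow> real^2" where
  "filter_factor_grad L x =
     (filter_factor L x * (1 - filter_factor L x)) *\<^sub>R filter_logit_grad L x"

definition filter_factor_hess :: "real \<Rightarrow> real^2 \<Rightarrow> real^2^2" where
  "filter_factor_hess L x =
     (filter_factor L x * (1 - filter_factor L x) * (1 - 2 * filter_factor L x))
        *\<^sub>R outer_prod (filter_logit_grad L x) (filter_logit_grad L x)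
     - (filter_factor L x * (1 - filter_factor L x) / (x $ 2)^2) *\<^sub>R outer_prod (axis 2 1) (axis 2 1)"

lemma has_derivative_filter_factor:
  assumes "0 < x $ 2"
  shows "(filter_factor L has_derivative (\<lambda>v. filter_factor_grad L x \<bullet> v)) (at x)"
proof -
  have "0 < x $ 2 + exp (2 * x $ 1 * L)"
    using assms by (simp add: add_pos_pos)
  then show ?thesis
    using assms unfolding filter_factor_def filter_factor_grad_def
    by (auto intro!: derivative_eq_intros simp: fun_eq_iff inner_filter_logit_grad divide_simps)
       (simp add: power2_eq_square algebra_simps)
qed

lemma has_derivative_filter_factor_grad:
  assumes "0 < x $ 2"
  shows "(filter_factor_grad L has_derivative (\<lambda>v. filter_factor_hess L x *v v)) (at x)"
proof -
  define a where "a = filter_factor L x"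
  define w where "w = filter_logit_grad L x"
  have a: "(filter_factor L has_derivative (\<lambda>v. (a * (1 - a)) * (w \<bullet> v))) (at x)"
    using has_derivative_filter_factor[OF assms, of L] by (simp add: filter_factor_grad_def a_def w_def)
  have t: "((\<lambda>y. filter_factor L y * (1 - filter_factor L y)) has_derivative
      (\<lambda>v. (a * (1 - a) * (1 - 2 * a)) * (w \<bullet> v))) (at x)"
    by (rule derivative_eq_intros a refl)+ (simp add: fun_eq_iff a_def algebra_simps)
  have w: "(filter_logit_grad L has_derivative (\<lambda>v. (- (v $ 2 / (x $ 2)^2)) *\<^sub>R axis 2 1)) (at x)"
    unfolding filter_logit_grad_def using assms
    by (auto intro!: derivative_eq_intros simp: fun_eq_iff power2_eq_square)
  show ?thesis
    unfolding filter_factor_grad_def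
    by (rule has_derivative_eq_rhs[OF has_derivative_scaleR[OF t w]])
       (simp add: fun_eq_iff filter_factor_hess_def a_def w_def
         scaleR_matrix_vector_assoc[symmetric] outer_prod_mult_vec inner_axis' algebra_simps)
qed

lemma exp_ge_linear_and_square:
  fixes L s0 s :: real
  assumes "0 \<le> L" "0 < s0" "s0 \<le> s"
  shows "L * s0 \<le> exp (2 * s * L)" and "(L * s0)^2 \<le> exp (2 * s * L)"
proof -
  have Ls: "0 \<le> L * s0" "L * s0 \<le> s * L"
    using assms by (auto simp: mult.commute mult_left_mono)
  have "s * L \<le> exp (s * L)"
    using exp_ge_add_one_self[of "s * L"] by linarith
  then have "(L * s0)^2 \<le> (exp (s * L))^2"
    using Ls by (intro power_mono) auto
  then show "(L * s0)^2 \<le> exp (2 * s * L)"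
    by (simp add: power2_eq_square mult_ac flip: exp_add)
  have "L * s0 \<le> 2 * (s * L)"
    using Ls by linarith
  also have "\<dots> \<le> exp (2 * (s * L))"
    using exp_ge_add_one_self[of "2 * (s * L)"] by linarith
  finally show "L * s0 \<le> exp (2 * s * L)"
    by (simp add: mult.assoc)
qed

(* t is a (1 - a) for a = \<alpha> / (\<alpha> + E); the decay t <= \<alpha> / E absorbs the powers of L = ln |k|
   created by differentiating in s. *)
lemma logistic_weight_bounds:
  fixes \<alpha> E L s0 :: real
  assumes pos: "0 < \<alpha>" "0 < E" "0 \<le> L" "0 < s0" and E: "L * s0 \<le> E" "(L * s0)^2 \<le> E"
  defines "t \<equiv> \<alpha> * E / (\<alpha> + E)^2"
  shows "0 \<le> t" "t \<le> 1" "t * L \<le> \<alpha> / s0" "t * L^2 \<le> \<alpha> / s0^2"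
proof -
  show "0 \<le> t"
    using pos by (simp add: t_def)
  have "\<alpha> * E \<le> (\<alpha> + E)^2"
    using pos by (simp add: power2_eq_square algebra_simps)
  then show "t \<le> 1"
    using pos by (simp add: t_def)
  have "E * E \<le> (\<alpha> + E)^2"
    using pos by (simp add: power2_eq_square algebra_simps)
  then have "t \<le> \<alpha> * E / (E * E)"
    unfolding t_def using pos by (intro divide_left_mono) auto
  then have t_le: "t \<le> \<alpha> / E"
    using pos by simp
  have "t * L \<le> \<alpha> * (L * s0 / E) / s0"
    using mult_right_mono[OF t_le pos(3)] pos by (simp add: field_simps)
  also have "\<dots> \<le> \<alpha> * 1 / s0"
    using pos E by (intro divide_right_mono mult_left_mono) auto
  finally show "t * L \<le> \<alpha> / s0"
    by simp
  have "t * L^2 \<le> \<alpha> * ((L * s0)^2 / E) / s0^2"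
    using mult_right_mono[OF t_le, of "L^2"] pos by (simp add: field_simps)
  also have "\<dots> \<le> \<alpha> * 1 / s0^2"
    using pos E by (intro divide_right_mono mult_left_mono) auto
  finally show "t * L^2 \<le> \<alpha> / s0^2"
    by simp
qed

lemma filter_factor_weight_bounds:
  assumes "0 < s0" "0 \<le> L" "s0 \<le> x $ 1" "0 < x $ 2"
  defines "t \<equiv> filter_factor L x * (1 - filter_factor L x)"
  shows "0 \<le> filter_factor L x" "filter_factor L x \<le> 1"
    and "0 \<le> t" "t \<le> 1" "t * L \<le> x $ 2 / s0" "t * L^2 \<le> x $ 2 / s0^2"
proof -
  define E where "E = exp (2 * x $ 1 * L)"
  have "0 < E"
    by (simp add: E_def)
  have ff: "filter_factor L x = x $ 2 / (x $ 2 + E)"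
    by (simp add: filter_factor_def E_def)
  then show "0 \<le> filter_factor L x" "filter_factor L x \<le> 1"
    using assms(4) \<open>0 < E\<close> by (simp_all add: divide_le_eq_1)
  have "t = x $ 2 * E / (x $ 2 + E)^2"
    using assms(4) \<open>0 < E\<close> by (simp add: t_def ff field_simps power2_eq_square)
  then show "0 \<le> t" "t \<le> 1" "t * L \<le> x $ 2 / s0" "t * L^2 \<le> x $ 2 / s0^2"
    using logistic_weight_bounds[OF assms(4) \<open>0 < E\<close> assms(2,1)]
      exp_ge_linear_and_square[OF assms(2,1,3)]
    by (simp_all add: E_def)
qed

lemma norm_filter_logit_grad_le:
  assumes "0 \<le> L" "0 < x $ 2"
  shows "norm (filter_logit_grad L x) \<le> 2 * L + 1 / x $ 2"
  using norm_triangle_ineq[of "(- 2 * L) *\<^sub>R axis 1 (1::real)" "(1 / x $ 2) *\<^sub>R axis 2 (1::real)"] assms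
  by (simp add: filter_logit_grad_def)

lemma norm_filter_factor_grad_le:
  assumes "0 < s0" "0 < \<alpha>0" "0 \<le> L" "s0 \<le> x $ 1" "\<alpha>0 \<le> x $ 2" "x $ 2 \<le> \<alpha>1"
  shows "norm (filter_factor_grad L x) \<le> 2 * \<alpha>1 / s0 + 1 / \<alpha>0"
proof -
  define t where "t = filter_factor L x * (1 - filter_factor L x)"
  have "0 < x $ 2"
    using assms by simp
  note t = filter_factor_weight_bounds[OF assms(1,3,4) \<open>0 < x $ 2\<close>, folded t_def]
  have "norm (filter_factor_grad L x) = t * norm (filter_logit_grad L x)"
    using t by (simp add: filter_factor_grad_def t_def)
  also have "\<dots> \<le> 2 * (t * L) + t / x $ 2"
    using mult_left_mono[OF norm_filter_logit_grad_le[OF assms(3) \<open>0 < x $ 2\<close>] t(3)]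
    by (simp add: algebra_simps)
  also have "\<dots> \<le> 2 * \<alpha>1 / s0 + 1 / \<alpha>0"
  proof (intro add_mono)
    show "2 * (t * L) \<le> 2 * \<alpha>1 / s0"
      using t(5) divide_right_mono[OF assms(6), of s0] assms(1) by simp
    show "t / x $ 2 \<le> 1 / \<alpha>0"
      using t(3,4) assms(2,5) by (simp add: frac_le)
  qed
  finally show ?thesis .
qed

lemma norm_filter_factor_hess_le:
  assumes "0 < s0" "0 < \<alpha>0" "0 \<le> L" "s0 \<le> x $ 1" "\<alpha>0 \<le> x $ 2" "x $ 2 \<le> \<alpha>1"
  shows "norm (filter_factor_hess L x) \<le> 4 * \<alpha>1 / s0^2 + 4 / s0 + 2 / \<alpha>0^2"
proof -
  define a t w where "a = filter_factor L x" and "t = a * (1 - a)" and "w = filter_logit_grad L x"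
  define e2 :: "real^2" where "e2 = axis 2 1"
  have "0 < x $ 2"
    using assms by simp
  note t = filter_factor_weight_bounds[OF assms(1,3,4) \<open>0 < x $ 2\<close>, folded a_def, folded t_def]
  have "norm (filter_factor_hess L x)
      \<le> norm ((t * (1 - 2 * a)) *\<^sub>R outer_prod w w) + norm ((t / (x $ 2)^2) *\<^sub>R outer_prod e2 e2)"
    unfolding filter_factor_hess_def a_def t_def w_def e2_def by (rule norm_triangle_ineq4)
  also have "\<dots> = t * \<bar>1 - 2 * a\<bar> * (norm w)^2 + t / (x $ 2)^2"
    using t(3) by (simp add: norm_outer_prod abs_mult power2_eq_square e2_def)
  also have "\<dots> \<le> t * 1 * (2 * L + 1 / x $ 2)^2 + t / (x $ 2)^2"
    using t(1,2,3) norm_filter_logit_grad_le[OF assms(3) \<open>0 < x $ 2\<close>]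
    by (intro add_mono mult_mono power_mono) (auto simp: w_def)
  also have "\<dots> = 4 * (t * L^2) + 4 * (t * L) / x $ 2 + 2 * t / (x $ 2)^2"
    using \<open>0 < x $ 2\<close> by (simp add: power2_eq_square field_simps)
  also have "\<dots> \<le> 4 * \<alpha>1 / s0^2 + 4 / s0 + 2 / \<alpha>0^2"
  proof (intro add_mono)
    show "4 * (t * L^2) \<le> 4 * \<alpha>1 / s0^2"
      using t(6) divide_right_mono[OF assms(6), of "s0^2"] by simp
    show "4 * (t * L) / x $ 2 \<le> 4 / s0"
      using divide_right_mono[OF t(5), of "x $ 2"] \<open>0 < x $ 2\<close> by simp
    show "2 * t / (x $ 2)^2 \<le> 2 / \<alpha>0^2"
      using t(3,4) assms(2,5) by (intro frac_le power_mono) auto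
  qed
  finally show ?thesis .
qed

lemma filter_factor_uniform_bounds:
  assumes "0 < s0" "0 < \<alpha>0" "\<alpha>0 \<le> \<alpha>1"
  obtains K where "0 \<le> K"
    and "\<And>L x. 0 \<le> L \<Longrightarrow> s0 \<le> x $ 1 \<Longrightarrow> \<alpha>0 \<le> x $ 2 \<Longrightarrow> x $ 2 \<le> \<alpha>1 \<Longrightarrow>
           \<bar>filter_factor L x\<bar> \<le> 1 \<and> norm (filter_factor_grad L x) \<le> K \<and> norm (filter_factor_hess L x) \<le> K"
proof -
  define K1 where "K1 = 2 * \<alpha>1 / s0 + 1 / \<alpha>0"
  define K2 where "K2 = 4 * \<alpha>1 / s0^2 + 4 / s0 + 2 / \<alpha>0^2"
  have "0 \<le> K1" "0 \<le> K2"
    using assms by (simp_all add: K1_def K2_def)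
  show ?thesis
  proof (rule that)
    show "0 \<le> K1 + K2"
      using \<open>0 \<le> K1\<close> \<open>0 \<le> K2\<close> by simp
    fix L :: real and x :: "real^2"
    assume x: "0 \<le> L" "s0 \<le> x $ 1" "\<alpha>0 \<le> x $ 2" "x $ 2 \<le> \<alpha>1"
    then have "0 < x $ 2"
      using assms(2) by simp
    show "\<bar>filter_factor L x\<bar> \<le> 1 \<and> norm (filter_factor_grad L x) \<le> K1 + K2
        \<and> norm (filter_factor_hess L x) \<le> K1 + K2"
      using filter_factor_weight_bounds(1,2)[OF assms(1) x(1,2) \<open>0 < x $ 2\<close>]
        norm_filter_factor_grad_le[OF assms(1,2) x, folded K1_def]
        norm_filter_factor_hess_le[OF assms(1,2) x, folded K2_def] \<open>0 \<le> K1\<close> \<open>0 \<le> K2\<close>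
      by simp
  qed
qed

section \<open>A single Fourier mode of the data misfit\<close>

(* The contribution |a g_k - u_k|^2 of one lattice point, with z = g_k and w = u_k. *)
definition mode_residual :: "complex \<Rightarrow> complex \<Rightarrow> real \<Rightarrow> real^2 \<Rightarrow> real" where
  "mode_residual z w L x = (cmod (of_real (filter_factor L x) * z - w))^2"

definition mode_residual_slope :: "complex \<Rightarrow> complex \<Rightarrow> real \<Rightarrow> real^2 \<Rightarrow> real" where
  "mode_residual_slope z w L x = 2 * ((cmod z)^2 * filter_factor L x - Re (z * cnj w))"

definition mode_residual_grad :: "complex \<Rightarrow> complex \<Rightarrow> real \<Rightarrow> real^2 \<Rightarrow> real^2" where
  "mode_residual_grad z w L x = mode_residual_slope z w L x *\<^sub>R filter_factor_grad L x"

definition mode_residual_hess :: "complex \<Rightarrow> complex \<Rightarrow> real \<Rightarrow> real^2 \<Rightarrow> real^2^2" where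
  "mode_residual_hess z w L x =
     mode_residual_slope z w L x *\<^sub>R filter_factor_hess L x
     + (2 * (cmod z)^2) *\<^sub>R outer_prod (filter_factor_grad L x) (filter_factor_grad L x)"

lemma mode_residual_eq:
  "mode_residual z w L x
     = (cmod z)^2 * (filter_factor L x)^2 - 2 * Re (z * cnj w) * filter_factor L x + (cmod w)^2"
  by (simp only: mode_residual_def cmod_power2) (simp add: power2_eq_square algebra_simps)

lemma has_derivative_mode_residual:
  assumes "0 < x $ 2"
  shows "(mode_residual z w L has_derivative (\<lambda>v. mode_residual_grad z w L x \<bullet> v)) (at x)"
  unfolding mode_residual_eq[abs_def]
  by (rule derivative_eq_intros has_derivative_filter_factor[OF assms] refl)+
     (simp add: fun_eq_iff mode_residual_grad_def mode_residual_slope_def algebra_simps)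

lemma has_derivative_mode_residual_grad:
  assumes "0 < x $ 2"
  shows "(mode_residual_grad z w L has_derivative (\<lambda>v. mode_residual_hess z w L x *v v)) (at x)"
  unfolding mode_residual_grad_def[abs_def] mode_residual_slope_def
  by (rule derivative_eq_intros has_derivative_filter_factor[OF assms]
        has_derivative_filter_factor_grad[OF assms] refl)+
     (simp add: fun_eq_iff mode_residual_hess_def mode_residual_slope_def outer_prod_mult_vec
        scaleR_matrix_vector_assoc[symmetric] algebra_simps)

lemma mode_residual_le:
  fixes z w :: complex
  assumes "\<bar>filter_factor L x\<bar> \<le> 1"
  shows "mode_residual z w L x \<le> 2 * ((cmod z)^2 + (cmod w)^2)"
proof -
  have "cmod (of_real (filter_factor L x) * z - w) \<le> cmod z + cmod w"
    using norm_triangle_ineq4[of "of_real (filter_factor L x) * z" w]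
      mult_right_le_one_le[OF _ _ assms, of "cmod z"]
    by (simp add: norm_mult mult.commute)
  then have "mode_residual z w L x \<le> (cmod z + cmod w)^2"
    unfolding mode_residual_def by (intro power_mono) auto
  also have "\<dots> \<le> 2 * ((cmod z)^2 + (cmod w)^2)"
    using sum_squares_bound[of "cmod z" "cmod w"] by (simp add: power2_eq_square algebra_simps)
  finally show ?thesis .
qed

lemma abs_mode_residual_slope_le:
  fixes z w :: complex
  assumes "\<bar>filter_factor L x\<bar> \<le> 1"
  shows "\<bar>mode_residual_slope z w L x\<bar> \<le> 3 * ((cmod z)^2 + (cmod w)^2)"
proof -
  have slope_arith: "\<bar>2 * (A - R)\<bar> \<le> 3 * (Z + W)"
    if "\<bar>A\<bar> \<le> Z" "\<bar>R\<bar> \<le> P" "2 * P \<le> Z + W" "0 \<le> W" for A R P Z W :: real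
    using that by (simp add: abs_le_iff)
  have "\<bar>(cmod z)^2 * filter_factor L x\<bar> \<le> (cmod z)^2"
    using mult_right_le_one_le[OF _ _ assms, of "(cmod z)^2"] by (simp add: abs_mult)
  moreover have "\<bar>Re (z * cnj w)\<bar> \<le> cmod z * cmod w"
    using abs_Re_le_cmod[of "z * cnj w"] by (simp add: norm_mult)
  ultimately show ?thesis
    unfolding mode_residual_slope_def using sum_squares_bound[of "cmod z" "cmod w"]
    by (intro slope_arith) (simp_all add: mult.assoc)
qed

lemma mode_residual_bounds:
  fixes z w :: complex
  assumes a: "\<bar>filter_factor L x\<bar> \<le> 1"
    and grad: "norm (filter_factor_grad L x) \<le> K" and hess: "norm (filter_factor_hess L x) \<le> K"
  defines "N \<equiv> (cmod z)^2 + (cmod w)^2"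
  shows "\<bar>mode_residual z w L x\<bar> \<le> (2 + 3 * K + 2 * K^2) * N"
    and "norm (mode_residual_grad z w L x) \<le> (2 + 3 * K + 2 * K^2) * N"
    and "norm (mode_residual_hess z w L x) \<le> (2 + 3 * K + 2 * K^2) * N"
proof -
  have "0 \<le> K"
    using grad norm_ge_zero by (rule order_trans[rotated])
  have "0 \<le> N"
    by (simp add: N_def)
  then have M: "(2 + 3 * K + 2 * K^2) * N = 2 * N + 3 * (N * K) + 2 * (N * K^2)"
    "0 \<le> N * K" "0 \<le> N * K^2"
    using \<open>0 \<le> K\<close> by (simp_all add: algebra_simps)
  note slope = abs_mode_residual_slope_le[OF a, of z w, folded N_def]
  have "0 \<le> mode_residual z w L x"
    by (simp add: mode_residual_def)
  then show "\<bar>mode_residual z w L x\<bar> \<le> (2 + 3 * K + 2 * K^2) * N"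
    using mode_residual_le[OF a, of z w, folded N_def] M \<open>0 \<le> N\<close> by linarith
  have "norm (mode_residual_grad z w L x) \<le> 3 * N * K"
    unfolding mode_residual_grad_def using slope grad \<open>0 \<le> N\<close> by (simp add: mult_mono)
  then show "norm (mode_residual_grad z w L x) \<le> (2 + 3 * K + 2 * K^2) * N"
    using M \<open>0 \<le> N\<close> by linarith
  have "norm (mode_residual_hess z w L x)
      \<le> \<bar>mode_residual_slope z w L x\<bar> * norm (filter_factor_hess L x)
         + 2 * (cmod z)^2 * (norm (filter_factor_grad L x))^2"
    unfolding mode_residual_hess_def
    by (rule order_trans[OF norm_triangle_ineq]) (simp add: norm_outer_prod power2_eq_square)
  also have "\<dots> \<le> 3 * N * K + 2 * N * K^2"
    using slope hess grad \<open>0 \<le> N\<close> by (intro add_mono mult_mono power_mono) (auto simp: N_def)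
  finally show "norm (mode_residual_hess z w L x) \<le> (2 + 3 * K + 2 * K^2) * N"
    using M \<open>0 \<le> N\<close> by linarith
qed

section \<open>The data misfit\<close>

(* At k = 0 the two factors differ (0 powr _ = 0 but ln 0 = 0); this is harmless since g has mean zero. *)
lemma S_op_eq_filter_factor:
  assumes "fourier_coeff g 0 = 0" and "0 < x $ 2"
  shows "S_op g (x $ 1) (x $ 2) k = of_real (filter_factor (ln (norm k)) x) * fourier_coeff g k"
proof (cases "k = 0")
  case False
  then have "norm k powr (2 * x $ 1) = exp (2 * x $ 1 * ln (norm k))"
    by (simp add: powr_def mult_ac)
  then show ?thesis
    by (simp add: S_op_def filter_factor_def)
qed (simp add: assms(1) S_op_def)

definition data_misfit :: "(real^'d \<Rightarrow> complex) \<Rightarrow> (real^'d \<Rightarrow> complex) \<Rightarrow> real^2 \<Rightarrow> real" where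
  "data_misfit g u x = infsum (\<lambda>k. (cmod (S_op g (x $ 1) (x $ 2) k - fourier_coeff u k))^2) lattice"

lemma j_fun_eq_data_misfit:
  "j_fun g u \<phi> = (\<lambda>x. 1 / (2 * (2 * pi) ^ CARD('d)) * data_misfit g u x + \<phi> x)"
  for g u :: "real^'d \<Rightarrow> complex"
  by (simp add: fun_eq_iff j_fun_def data_misfit_def)

lemma data_misfit_eq_suminf:
  fixes g u :: "real^'d \<Rightarrow> complex"
  assumes g0: "fourier_coeff g 0 = 0" and x: "0 < x $ 2" and e: "bij_betw e UNIV lattice"
    and summable: "summable (\<lambda>n. mode_residual (fourier_coeff g (e n)) (fourier_coeff u (e n)) (ln (norm (e n))) x)"
  shows "data_misfit g u x
           = (\<Sum>n. mode_residual (fourier_coeff g (e n)) (fourier_coeff u (e n)) (ln (norm (e n))) x)"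
proof -
  define r where "r = (\<lambda>n. mode_residual (fourier_coeff g (e n)) (fourier_coeff u (e n)) (ln (norm (e n))) x)"
  have summand: "(cmod (S_op g (x $ 1) (x $ 2) (e n) - fourier_coeff u (e n)))^2 = r n" for n
    by (simp add: r_def mode_residual_def S_op_eq_filter_factor[OF g0 x])
  have "(r has_sum (\<Sum>n. r n)) UNIV"
    using summable unfolding r_def by (intro sums_nonneg_imp_has_sum summable_sums) (simp_all add: mode_residual_def)
  then have "infsum r UNIV = (\<Sum>n. r n)"
    by (rule infsumI)
  then show ?thesis
    unfolding data_misfit_def infsum_reindex_bij_betw[OF e, symmetric] summand by (simp add: r_def)
qed

lemma mode_residual_series_grad_hess:
  assumes S: "open S" "convex S" "\<And>x. x \<in> S \<Longrightarrow> 0 < x $ 2"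
    and filter_bounds: "\<And>L x. 0 \<le> L \<Longrightarrow> x \<in> S \<Longrightarrow> \<bar>filter_factor L x\<bar> \<le> 1
          \<and> norm (filter_factor_grad L x) \<le> K \<and> norm (filter_factor_hess L x) \<le> K"
    and L: "\<And>n. 0 \<le> L n" and N: "summable (\<lambda>n. (cmod (z n))^2 + (cmod (w n))^2)"
  shows "grad_hess (\<lambda>x. \<Sum>n. mode_residual (z n) (w n) (L n) x)
      (\<lambda>x. \<Sum>n. mode_residual_grad (z n) (w n) (L n) x) (\<lambda>x. \<Sum>n. mode_residual_hess (z n) (w n) (L n) x) S"
    and "\<And>x. x \<in> S \<Longrightarrow> summable (\<lambda>n. mode_residual (z n) (w n) (L n) x)"
    and "\<And>x. x \<in> S \<Longrightarrow> norm (\<Sum>n. mode_residual_hess (z n) (w n) (L n) x)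
           \<le> (\<Sum>n. (2 + 3 * K + 2 * K^2) * ((cmod (z n))^2 + (cmod (w n))^2))"
proof -
  define M where "M = 2 + 3 * K + 2 * K^2"
  have MN: "summable (\<lambda>n. M * ((cmod (z n))^2 + (cmod (w n))^2))"
    using N by (rule summable_mult)
  have bounds: "\<bar>mode_residual (z n) (w n) (L n) x\<bar> \<le> M * ((cmod (z n))^2 + (cmod (w n))^2)"
      "norm (mode_residual_grad (z n) (w n) (L n) x) \<le> M * ((cmod (z n))^2 + (cmod (w n))^2)"
      "norm (mode_residual_hess (z n) (w n) (L n) x) \<le> M * ((cmod (z n))^2 + (cmod (w n))^2)"
    if "x \<in> S" for n x
    using filter_bounds[OF L that] mode_residual_bounds[of "L n" x K "z n" "w n"] by (simp_all add: M_def)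
  have d1: "(mode_residual (z n) (w n) (L n) has_derivative (\<lambda>v. mode_residual_grad (z n) (w n) (L n) x \<bullet> v)) (at x)"
    if "x \<in> S" for n x
    using S(3)[OF that] by (rule has_derivative_mode_residual)
  have d2: "(mode_residual_grad (z n) (w n) (L n) has_derivative (\<lambda>v. mode_residual_hess (z n) (w n) (L n) x *v v)) (at x)"
    if "x \<in> S" for n x
    using S(3)[OF that] by (rule has_derivative_mode_residual_grad)
  show "grad_hess (\<lambda>x. \<Sum>n. mode_residual (z n) (w n) (L n) x)
      (\<lambda>x. \<Sum>n. mode_residual_grad (z n) (w n) (L n) x) (\<lambda>x. \<Sum>n. mode_residual_hess (z n) (w n) (L n) x) S"
    and "\<And>x. x \<in> S \<Longrightarrow> norm (\<Sum>n. mode_residual_hess (z n) (w n) (L n) x)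
           \<le> (\<Sum>n. (2 + 3 * K + 2 * K^2) * ((cmod (z n))^2 + (cmod (w n))^2))"
    unfolding M_def[symmetric] by (rule grad_hess_suminf[OF S(1,2) d1 d2 bounds MN], assumption+)+
  show "summable (\<lambda>n. mode_residual (z n) (w n) (L n) x)" if "x \<in> S" for x
    by (rule summable_comparison_test'[OF MN]) (use bounds(1)[OF that] in auto)
qed

lemma data_misfit_grad_hess:
  fixes g u :: "real^'d \<Rightarrow> complex"
  assumes S: "open S" "convex S" "\<And>x. x \<in> S \<Longrightarrow> 0 < x $ 2"
    and filter_bounds: "\<And>L x. 0 \<le> L \<Longrightarrow> x \<in> S \<Longrightarrow> \<bar>filter_factor L x\<bar> \<le> 1
          \<and> norm (filter_factor_grad L x) \<le> K \<and> norm (filter_factor_hess L x) \<le> K"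
    and "0 \<le> K" and g: "L2_0_torus g" and u: "L2_torus u"
  obtains G H where "grad_hess (data_misfit g u) G H S"
    and "\<And>x. x \<in> S \<Longrightarrow> norm (H x)
           \<le> (2 + 3 * K + 2 * K^2) * (2 * pi) ^ CARD('d) * ((L2_norm_torus g)^2 + (L2_norm_torus u)^2)"
proof -
  obtain e :: "nat \<Rightarrow> real^'d" where e: "bij_betw e UNIV lattice"
    using bij_betw_from_nat_into[OF lattice_countable lattice_infinite] by blast
  define z w L where "z n = fourier_coeff g (e n)" and "w n = fourier_coeff u (e n)"
    and "L n = ln (norm (e n))" for n
  have g0: "fourier_coeff g 0 = 0" and "L2_torus g"
    using g by (simp_all add: L2_0_torus_def fourier_coeff_def)
  note N = fourier_coeff_squares_summable[OF \<open>L2_torus g\<close> u e, folded z_def w_def]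
  have L: "0 \<le> L n" for n
    using e by (simp add: L_def ln_norm_lattice_nonneg bij_betwE)
  have series: "grad_hess (\<lambda>x. \<Sum>n. mode_residual (z n) (w n) (L n) x)
      (\<lambda>x. \<Sum>n. mode_residual_grad (z n) (w n) (L n) x) (\<lambda>x. \<Sum>n. mode_residual_hess (z n) (w n) (L n) x) S"
    and summable: "\<And>x. x \<in> S \<Longrightarrow> summable (\<lambda>n. mode_residual (z n) (w n) (L n) x)"
    and hess: "\<And>x. x \<in> S \<Longrightarrow> norm (\<Sum>n. mode_residual_hess (z n) (w n) (L n) x)
      \<le> (\<Sum>n. (2 + 3 * K + 2 * K^2) * ((cmod (z n))^2 + (cmod (w n))^2))"
    by (rule mode_residual_series_grad_hess[OF S filter_bounds L N(1)], assumption+)+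
  show ?thesis
  proof (rule that)
    show "grad_hess (data_misfit g u) (\<lambda>x. \<Sum>n. mode_residual_grad (z n) (w n) (L n) x)
        (\<lambda>x. \<Sum>n. mode_residual_hess (z n) (w n) (L n) x) S"
      using series S(1)
    proof (rule grad_hess_cong)
      show "(\<Sum>n. mode_residual (z n) (w n) (L n) x) = data_misfit g u x" if "x \<in> S" for x
        using summable[OF that] unfolding z_def w_def L_def
        by (rule data_misfit_eq_suminf[OF g0 S(3)[OF that] e, symmetric])
    qed
    show "norm (\<Sum>n. mode_residual_hess (z n) (w n) (L n) x)
        \<le> (2 + 3 * K + 2 * K^2) * (2 * pi) ^ CARD('d) * ((L2_norm_torus g)^2 + (L2_norm_torus u)^2)"
      if "x \<in> S" for x
      using hess[OF that] mult_left_mono[OF N(2), of "2 + 3 * K + 2 * K^2"] \<open>0 \<le> K\<close>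
      by (simp add: suminf_mult[OF N(1)] mult.assoc)
  qed
qed

lemma j_fun_grad_hess_lower_bound:
  fixes g u :: "real^'d \<Rightarrow> complex"
  assumes S: "open S" "convex S" "\<And>x. x \<in> S \<Longrightarrow> 0 < x $ 2"
    and filter_bounds: "\<And>L x. 0 \<le> L \<Longrightarrow> x \<in> S \<Longrightarrow> \<bar>filter_factor L x\<bar> \<le> 1
          \<and> norm (filter_factor_grad L x) \<le> K \<and> norm (filter_factor_hess L x) \<le> K"
    and "0 \<le> K"
    and \<phi>: "grad_hess \<phi> G H S" and strong: "\<And>x v. x \<in> S \<Longrightarrow> \<theta> * (v \<bullet> v) \<le> v \<bullet> (H x *v v)"
    and g: "L2_0_torus g" and u: "L2_torus u"
  obtains Gj Hj where "grad_hess (j_fun g u \<phi>) Gj Hj S"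
    and "\<And>x v. x \<in> S \<Longrightarrow>
           (\<theta> - (2 + 3 * K + 2 * K^2) / 2 * ((L2_norm_torus g)^2 + (L2_norm_torus u)^2)) * (v \<bullet> v)
             \<le> v \<bullet> (Hj x *v v)"
proof -
  define V :: real where "V = (2 * pi) ^ CARD('d)"
  define c where "c = 1 / (2 * V)"
  have "0 < V"
    by (simp add: V_def)
  obtain Gd Hd where Gd: "grad_hess (data_misfit g u) Gd Hd S"
    and Hd: "\<And>x. x \<in> S \<Longrightarrow> norm (Hd x) \<le> (2 + 3 * K + 2 * K^2) * V * ((L2_norm_torus g)^2 + (L2_norm_torus u)^2)"
    using data_misfit_grad_hess[OF S filter_bounds \<open>0 \<le> K\<close> g u] unfolding V_def by blast
  show ?thesis
  proof (rule that)
    show "grad_hess (j_fun g u \<phi>) (\<lambda>x. c *\<^sub>R Gd x + G x) (\<lambda>x. c *\<^sub>R Hd x + H x) S"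
      unfolding j_fun_eq_data_misfit c_def V_def by (rule grad_hess_scaled_add[OF Gd \<phi>])
    fix x v assume "x \<in> S"
    have "norm (c *\<^sub>R Hd x) \<le> (2 + 3 * K + 2 * K^2) / 2 * ((L2_norm_torus g)^2 + (L2_norm_torus u)^2)"
      using mult_left_mono[OF Hd[OF \<open>x \<in> S\<close>], of c] \<open>0 < V\<close> by (simp add: c_def)
    then show "(\<theta> - (2 + 3 * K + 2 * K^2) / 2 * ((L2_norm_torus g)^2 + (L2_norm_torus u)^2)) * (v \<bullet> v)
        \<le> v \<bullet> ((c *\<^sub>R Hd x + H x) *v v)"
      by (rule quadratic_form_perturbation[OF strong[OF \<open>x \<in> S\<close>]])
  qed
qed

theorem lemma4:
  fixes s0 s1 \<alpha>0 \<alpha>1 \<theta> :: real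
  assumes "0 < s0" "s0 < s1" "0 < \<alpha>0" "\<alpha>0 < \<alpha>1" "0 < \<theta>"
  shows "\<exists>\<delta>>0. \<forall>(\<phi> :: real^2 \<Rightarrow> real) G H.
     (grad_hess \<phi> G H (box (vector [s0, \<alpha>0]) (vector [s1, \<alpha>1]))
      \<and> continuous_on (box (vector [s0, \<alpha>0]) (vector [s1, \<alpha>1])) H
      \<and> (\<forall>x\<in>box (vector [s0, \<alpha>0]) (vector [s1, \<alpha>1]). 0 \<le> \<phi> x)
      \<and> convex_on (box (vector [s0, \<alpha>0]) (vector [s1, \<alpha>1])) \<phi>
      \<and> (\<forall>x0 \<in> cbox (vector [s0, \<alpha>0]) (vector [s1, \<alpha>1]) - box (vector [s0, \<alpha>0]) (vector [s1, \<alpha>1]).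
            filterlim \<phi> at_top (at x0 within box (vector [s0, \<alpha>0]) (vector [s1, \<alpha>1])))
      \<and> (\<forall>x\<in>box (vector [s0, \<alpha>0]) (vector [s1, \<alpha>1]). \<forall>v. v \<bullet> (H x *v v) - \<theta> * (v \<bullet> v) \<ge> 0))
     \<longrightarrow> (\<forall>(g :: real^'d \<Rightarrow> complex) (u :: real^'d \<Rightarrow> complex).
           L2_0_torus g \<and> L2_torus u \<and> L2_norm_torus g < \<delta> \<and> L2_norm_torus u < \<delta>
           \<longrightarrow> (\<exists>\<kappa>>0. \<exists>Gj Hj. grad_hess (j_fun g u \<phi>) Gj Hj (box (vector [s0, \<alpha>0]) (vector [s1, \<alpha>1]))
                 \<and> (\<forall>x\<in>box (vector [s0, \<alpha>0]) (vector [s1, \<alpha>1]). \<forall>v. v \<bullet> (Hj x *v v) - \<kappa> * (v \<bullet> v) \<ge> 0)))"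
proof -
  define B :: "(real^2) set" where "B = box (vector [s0, \<alpha>0]) (vector [s1, \<alpha>1])"
  have B: "open B" "convex B"
    by (simp_all add: B_def open_box)
  have B_mem: "s0 \<le> x $ 1 \<and> \<alpha>0 \<le> x $ 2 \<and> x $ 2 \<le> \<alpha>1 \<and> 0 < x $ 2" if "x \<in> B" for x
    using that assms by (simp add: B_def mem_box_cart forall_2)
  obtain K where "0 \<le> K" and K: "\<And>L x. 0 \<le> L \<Longrightarrow> s0 \<le> x $ 1 \<Longrightarrow> \<alpha>0 \<le> x $ 2 \<Longrightarrow> x $ 2 \<le> \<alpha>1 \<Longrightarrow>
      \<bar>filter_factor L x\<bar> \<le> 1 \<and> norm (filter_factor_grad L x) \<le> K \<and> norm (filter_factor_hess L x) \<le> K"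
    using filter_factor_uniform_bounds[of s0 \<alpha>0 \<alpha>1] assms by auto
  define M where "M = (2 + 3 * K + 2 * K^2) / 2"
  define \<delta> where "\<delta> = min 1 (\<theta> / (2 * M))"
  have "0 < M" "0 < \<delta>"
    using \<open>0 \<le> K\<close> assms by (simp_all add: M_def \<delta>_def add_pos_nonneg)
  show ?thesis
    unfolding B_def[symmetric]
  proof (rule exI[of _ \<delta>], intro conjI allI impI \<open>0 < \<delta>\<close>)
    fix \<phi> G H and g u :: "real^'d \<Rightarrow> complex"
    assume \<phi>: "grad_hess \<phi> G H B \<and> continuous_on B H \<and> (\<forall>x\<in>B. 0 \<le> \<phi> x) \<and> convex_on B \<phi>
      \<and> (\<forall>x0\<in>cbox (vector [s0, \<alpha>0]) (vector [s1, \<alpha>1]) - B. filterlim \<phi> at_top (at x0 within B))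
      \<and> (\<forall>x\<in>B. \<forall>v. 0 \<le> v \<bullet> (H x *v v) - \<theta> * (v \<bullet> v))"
      and gu: "L2_0_torus g \<and> L2_torus u \<and> L2_norm_torus g < \<delta> \<and> L2_norm_torus u < \<delta>"
    have "(L2_norm_torus g)^2 < \<delta>" "(L2_norm_torus u)^2 < \<delta>"
      using gu L2_norm_torus_nonneg[of g] L2_norm_torus_nonneg[of u] \<open>0 < \<delta>\<close>
      by (auto simp: \<delta>_def power2_eq_square intro: le_less_trans[OF mult_right_le_one_le])
    then have small: "M * ((L2_norm_torus g)^2 + (L2_norm_torus u)^2) < \<theta>"
      using \<open>0 < M\<close> assms(5) by (simp add: \<delta>_def field_simps)
    obtain Gj Hj where "grad_hess (j_fun g u \<phi>) Gj Hj B"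
      and "\<And>x v. x \<in> B \<Longrightarrow> (\<theta> - M * ((L2_norm_torus g)^2 + (L2_norm_torus u)^2)) * (v \<bullet> v) \<le> v \<bullet> (Hj x *v v)"
      using j_fun_grad_hess_lower_bound[OF B _ K \<open>0 \<le> K\<close>, of \<phi> G H \<theta> g u] B_mem \<phi> gu
      unfolding M_def by auto
    then show "\<exists>\<kappa>>0. \<exists>Gj Hj. grad_hess (j_fun g u \<phi>) Gj Hj B \<and> (\<forall>x\<in>B. \<forall>v. 0 \<le> v \<bullet> (Hj x *v v) - \<kappa> * (v \<bullet> v))"
      using small by (intro exI[of _ "\<theta> - M * ((L2_norm_torus g)^2 + (L2_norm_torus u)^2)"]) auto
  qed
qed

end
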